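(* Let $b\ge 1$ and $L\ge 1$ be integers. Let $A$ be the set of permutations $s\in\mathcal{S}_L$ all of whose cycles have length at most $b$, and let $B$ be the set of permutations $t\in\mathcal{S}_L$ such that there do not exist integers $i,j$ with $j\ge 0$, $j+b<i\le L$ and $t(j+k)>t(i)$ for all $k\in\{1,\ldots,b\}$. Then the map $s\mapsto \widetilde{F(s)}$ is a bijection from $A$ onto $B$. In particular $|A|=|B|$.
   Context: $\mathcal{S}_L$ denotes the set of permutations of $\{1,\ldots,L\}$; a permutation $s$ is identified with the word $s(1)s(2)\cdots s(L)$. Cycles include fixed points. The Foata correspondence $F:\mathcal{S}_L\to\mathcal{S}_L$ is defined as follows. Take the cycle decomposition of $s$ (including fixed points). Write each cycle starting with its largest element (the cycle head), i.e. the cycle with largest element $c_1$ is written $[c_1\,s(c_1)\,s^2(c_1)\cdots s^{d-1}(c_1)]$ where $d$ is its length. Order the cycles so that their cycle heads are increasing from left to right. Removing the brackets gives a word with $L$ distinct letters from $\{1,\ldots,L\}$, regarded as a permutation; this is $F(s)$. (Example: $s=359724681$ has cycles $[139][25][476][8]$, written canonically as $[52][764][8][913]$, so $F(s)=527648913$.) It is a known fact that $F$ is a bijection of $\mathcal{S}_L$. For $u\in\mathcal{S}_L$, $\tilde u\in\mathcal{S}_L$ is defined by $\tilde u(i)=L+1-u(L+1-i)$ for all $i$ (rotation of the point diagram by $180$ degrees). *)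

theory Defs
  imports "HOL-Combinatorics.Permutations"
begin

definition perms :: "nat \<Rightarrow> (nat \<Rightarrow> nat) set" where
  "perms L = {p. p permutes {1..L}}"

definition cyc_len :: "(nat \<Rightarrow> nat) \<Rightarrow> nat \<Rightarrow> nat" where
  "cyc_len s c = (LEAST n. 0 < n \<and> (s ^^ n) c = c)"

definition cyc_elems :: "(nat \<Rightarrow> nat) \<Rightarrow> nat \<Rightarrow> nat set" where
  "cyc_elems s c = {(s ^^ k) c | k. True}"

definition cyc_heads :: "nat \<Rightarrow> (nat \<Rightarrow> nat) \<Rightarrow> nat set" where
  "cyc_heads L s = {c \<in> {1..L}. c = Max (cyc_elems s c)}"

definition cyc_word :: "(nat \<Rightarrow> nat) \<Rightarrow> nat \<Rightarrow> nat list" where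
  "cyc_word s c = map (\<lambda>k. (s ^^ k) c) [0..<cyc_len s c]"

definition foata_word :: "nat \<Rightarrow> (nat \<Rightarrow> nat) \<Rightarrow> nat list" where
  "foata_word L s = concat (map (cyc_word s) (sorted_list_of_set (cyc_heads L s)))"

definition foata :: "nat \<Rightarrow> (nat \<Rightarrow> nat) \<Rightarrow> (nat \<Rightarrow> nat)" where
  "foata L s = (\<lambda>i. if i \<in> {1..L} then foata_word L s ! (i - 1) else i)"

definition tilde :: "nat \<Rightarrow> (nat \<Rightarrow> nat) \<Rightarrow> (nat \<Rightarrow> nat)" where
  "tilde L u = (\<lambda>i. if i \<in> {1..L} then L + 1 - u (L + 1 - i) else i)"

definition setA :: "nat \<Rightarrow> nat \<Rightarrow> (nat \<Rightarrow> nat) set" where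
  "setA b L = {s \<in> perms L. \<forall>c\<in>{1..L}. cyc_len s c \<le> b}"

definition setB :: "nat \<Rightarrow> nat \<Rightarrow> (nat \<Rightarrow> nat) set" where
  "setB b L = {t \<in> perms L. \<not> (\<exists>i j. j + b < i \<and> i \<le> L \<and>
                                      (\<forall>k\<in>{1..b}. t (j + k) > t i))}"

end

(*
  F(s) concatenates the cycles of s, each written as a block that starts with its largest
  element, the block heads increasing. So every letter is smaller than all later block heads,
  the blocks can be read off the word, and F is injective, hence a bijection of the finite set
  of permutations. A block longer than b yields a letter followed by b smaller letters (its
  tail). Conversely, if some letter is followed later by b consecutive smaller letters and all
  blocks have length at most b, these b letters contain a block head, which exceeds every
  earlier letter. Rotating the point diagram by 180 degrees turns this pattern into the one
  excluded from B.
*)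

theory Submission
  imports Defs
begin

section \<open>Cycles of a permutation\<close>

lemma cyc_len_pos:
  assumes "permutation s"
  shows "0 < cyc_len s c" and "(s ^^ cyc_len s c) c = c"
proof -
  obtain n where "0 < n" "(s ^^ n) c = c" using permutation_self[OF assms] .
  hence "0 < cyc_len s c \<and> (s ^^ cyc_len s c) c = c"
    unfolding cyc_len_def by (rule LeastI[of "\<lambda>n. 0 < n \<and> (s ^^ n) c = c", OF conjI])
  thus "0 < cyc_len s c" "(s ^^ cyc_len s c) c = c" by auto
qed

lemma funpow_cyc_len_neq:
  assumes "0 < n" "n < cyc_len s c" shows "(s ^^ n) c \<noteq> c"
  using not_less_Least[of n "\<lambda>n. 0 < n \<and> (s ^^ n) c = c"] assms unfolding cyc_len_def by simp

lemma funpow_mod_cyc_len: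
  assumes "permutation s" shows "(s ^^ (k mod cyc_len s c)) c = (s ^^ k) c"
  using funpow_mod_eq cyc_len_pos(2)[OF assms] .

lemma funpow_commute_apply: "(s ^^ n) ((s ^^ k) c) = (s ^^ k) ((s ^^ n) c)"
  by (metis add.commute comp_apply funpow_add)

lemma cyc_len_funpow:
  assumes "permutation s" shows "cyc_len s ((s ^^ k) c) = cyc_len s c"
proof -
  have "inj (s ^^ k)" using permutation_bijective[OF assms] by (simp add: bij_is_inj)
  hence "(s ^^ n) ((s ^^ k) c) = (s ^^ k) c \<longleftrightarrow> (s ^^ n) c = c" for n
    by (metis funpow_commute_apply injD)
  thus ?thesis unfolding cyc_len_def by simp
qed

lemma cyc_word_length [simp]: "length (cyc_word s c) = cyc_len s c"
  unfolding cyc_word_def by simp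

lemma cyc_word_nth: "r < cyc_len s c \<Longrightarrow> cyc_word s c ! r = (s ^^ r) c"
  unfolding cyc_word_def by simp

lemma cyc_word_hd:
  assumes "permutation s" shows "cyc_word s c \<noteq> []" "hd (cyc_word s c) = c"
  using cyc_len_pos(1)[OF assms, of c] by (auto simp: cyc_word_def hd_map upt_conv_Cons)

lemma cyc_word_distinct:
  assumes "permutation s" shows "distinct (cyc_word s c)"
proof -
  have "inj (s ^^ i)" for i using permutation_bijective[OF assms] by (simp add: bij_is_inj)
  have "(s ^^ i) c \<noteq> (s ^^ j) c" if "i < j" "j < cyc_len s c" for i j
  proof
    assume "(s ^^ i) c = (s ^^ j) c"
    hence "(s ^^ i) c = (s ^^ i) ((s ^^ (j - i)) c)"
      using \<open>i < j\<close> by (metis funpow_add le_add_diff_inverse less_imp_le o_apply)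
    hence "(s ^^ (j - i)) c = c" using \<open>inj (s ^^ i)\<close> by (metis injD)
    thus False using funpow_cyc_len_neq[of "j - i" s c] that by simp
  qed
  hence "inj_on (\<lambda>k. (s ^^ k) c) {0..<cyc_len s c}"
    by (intro inj_onI) (metis atLeastLessThan_iff linorder_neqE_nat)
  thus ?thesis unfolding cyc_word_def by (simp add: distinct_map)
qed

lemma set_cyc_word:
  assumes "permutation s" shows "set (cyc_word s c) = cyc_elems s c"
proof -
  have "\<exists>j<cyc_len s c. (s ^^ k) c = (s ^^ j) c" for k
    using funpow_mod_cyc_len[OF assms] cyc_len_pos(1)[OF assms] by (metis mod_less_divisor)
  thus ?thesis unfolding cyc_elems_def cyc_word_def by fastforce
qed

lemma cyc_elems_self: "c \<in> cyc_elems s c"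
  unfolding cyc_elems_def by (auto intro!: exI[of _ 0])

lemma cyc_elems_subset:
  assumes "s permutes S" "c \<in> S" shows "cyc_elems s c \<subseteq> S"
  unfolding cyc_elems_def using permutes_in_funpow_image[OF assms] by auto

lemma cyc_elems_eq:
  assumes "permutation s" "y \<in> cyc_elems s c" shows "cyc_elems s y = cyc_elems s c"
proof -
  obtain k where y: "y = (s ^^ k) c" using assms(2) unfolding cyc_elems_def by auto
  let ?d = "cyc_len s c"
  have "(s ^^ j) y \<in> cyc_elems s c" for j
    unfolding y cyc_elems_def by (auto simp: funpow_add intro!: exI[of _ "j + k"])
  moreover have "(s ^^ j) c \<in> cyc_elems s y" for j
  proof -
    have "k \<le> ?d * k" using cyc_len_pos(1)[OF assms(1), of c] by simp
    hence "k \<le> j + ?d * k" by linarith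
    have "(s ^^ j) c = (s ^^ (j + ?d * k)) c"
      using funpow_mod_cyc_len[OF assms(1), of j c] funpow_mod_cyc_len[OF assms(1), of "j + ?d * k" c]
      by simp
    also have "\<dots> = (s ^^ (j + ?d * k - k)) y"
      unfolding y using \<open>k \<le> j + ?d * k\<close> by (metis funpow_add le_add_diff_inverse2 o_apply)
    finally show ?thesis unfolding cyc_elems_def by auto
  qed
  ultimately show ?thesis unfolding cyc_elems_def by auto
qed

lemma cyc_word_next:
  assumes "permutation s" "r < cyc_len s c"
  shows "s (cyc_word s c ! r) = (if r + 1 < cyc_len s c then cyc_word s c ! (r + 1) else c)"
proof -
  have "s (cyc_word s c ! r) = (s ^^ Suc r) c" using assms(2) by (simp add: cyc_word_nth)
  moreover have "(s ^^ Suc r) c = c" if "\<not> r + 1 < cyc_len s c"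
    using that assms(2) cyc_len_pos(2)[OF assms(1), of c] by (metis Suc_eq_plus1 Suc_lessI)
  ultimately show ?thesis by (simp add: cyc_word_nth)
qed

lemma cyc_len_cyc_elems:
  assumes "permutation s" "y \<in> cyc_elems s c" shows "cyc_len s y = cyc_len s c"
  using assms(2) cyc_len_funpow[OF assms(1)] unfolding cyc_elems_def by auto

section \<open>Words made of max-first blocks\<close>

definition foata_blocks :: "'a::linorder list list \<Rightarrow> bool" where
  "foata_blocks Bs \<longleftrightarrow>
     (\<forall>B\<in>set Bs. B \<noteq> [] \<and> (\<forall>x\<in>set (tl B). x < hd B)) \<and> sorted_wrt (<) (map hd Bs)"

text \<open>The pattern excluded from \<open>setB\<close>, read before the rotation by 180 degrees.\<close>

definition has_dominated_window :: "nat \<Rightarrow> 'a::linorder list \<Rightarrow> bool" where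
  "has_dominated_window b w \<longleftrightarrow> (\<exists>p q. p < q \<and> q + b \<le> length w \<and> (\<forall>k<b. w ! (q + k) < w ! p))"

lemma foata_blocks_Cons:
  "foata_blocks (B # Bs) \<longleftrightarrow>
     B \<noteq> [] \<and> (\<forall>x\<in>set (tl B). x < hd B) \<and> (\<forall>C\<in>set Bs. hd B < hd C) \<and> foata_blocks Bs"
  unfolding foata_blocks_def by auto

lemma le_hd_if_tl_less:
  fixes B :: "'a::linorder list"
  assumes "\<forall>x\<in>set (tl B). x < hd B" "x \<in> set B" shows "x \<le> hd B"
  using assms by (cases B) auto

lemma concat_Cons_nth_length:
  "C \<noteq> [] \<Longrightarrow> concat (B # C # Cs) ! length B = hd C"
  by (cases C) (simp_all add: nth_append)

lemma foata_blocks_concat_first_not_shorter: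
  assumes "foata_blocks (B # Bs)" "foata_blocks (C # Cs)" "concat (B # Bs) = concat (C # Cs)"
  shows "\<not> length B < length C"
proof
  assume lt: "length B < length C"
  from assms(1,2) have B: "B \<noteq> []" "\<forall>C\<in>set Bs. hd B < hd C" "foata_blocks Bs"
    and C: "C \<noteq> []" "\<forall>x\<in>set (tl C). x < hd C"
    by (auto simp: foata_blocks_Cons)
  have "hd B = hd C" using assms(3) B(1) C(1) by (cases B; cases C) auto
  have "Bs \<noteq> []" using assms(3) lt by auto
  then obtain B' Bs' where Bs: "Bs = B' # Bs'" by (cases Bs) auto
  hence "B' \<noteq> []" using B(3) by (simp add: foata_blocks_Cons)
  \<comment> \<open>The letter after \<open>B\<close> is the head of the next block, yet it lies in the tail of \<open>C\<close>.\<close>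
  have "concat (B # Bs) ! length B = C ! length B" using assms(3) lt by (simp add: nth_append)
  also have "\<dots> \<in> set (tl C)" using lt B(1) C(1) by (cases C; cases B) (auto intro!: nth_mem)
  finally have "hd B' < hd B"
    using concat_Cons_nth_length[OF \<open>B' \<noteq> []\<close>] C(2) \<open>hd B = hd C\<close> Bs by simp
  thus False using B(2) Bs by auto
qed

lemma foata_blocks_concat_inj:
  "foata_blocks Bs \<Longrightarrow> foata_blocks Cs \<Longrightarrow> concat Bs = concat Cs \<Longrightarrow> Bs = Cs"
proof (induction Bs arbitrary: Cs)
  case Nil
  thus ?case by (cases Cs) (auto simp: foata_blocks_Cons)
next
  case (Cons B Bs)
  have "B \<noteq> []" using Cons.prems(1) by (simp add: foata_blocks_Cons)
  then obtain C Cs' where Cs: "Cs = C # Cs'" using Cons.prems(3) by (cases Cs) auto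
  hence "length B = length C"
    using foata_blocks_concat_first_not_shorter[of B Bs C Cs']
      foata_blocks_concat_first_not_shorter[of C Cs' B Bs] Cons.prems
    by (metis linorder_neqE_nat)
  hence "B = C" using Cons.prems(3) Cs by (metis append_eq_append_conv concat.simps(2))
  thus ?case using Cons Cs by (simp add: foata_blocks_Cons)
qed

lemma has_dominated_window_append:
  assumes "has_dominated_window b w" shows "has_dominated_window b (u @ w)"
proof -
  obtain p q where pq: "p < q" "q + b \<le> length w" "\<forall>k<b. w ! (q + k) < w ! p"
    using assms unfolding has_dominated_window_def by blast
  have "(u @ w) ! (length u + i) = w ! i" for i by (simp add: nth_append)
  hence "\<forall>k<b. (u @ w) ! (length u + q + k) < (u @ w) ! (length u + p)"
    using pq(3) by (simp add: add.assoc)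
  thus ?thesis unfolding has_dominated_window_def using pq(1,2)
    by (intro exI[of _ "length u + p"] exI[of _ "length u + q"]) simp
qed

lemma has_dominated_window_long_hd:
  assumes "b < length B" "\<forall>x\<in>set (tl B). x < hd B"
  shows "has_dominated_window b (B @ w)"
  unfolding has_dominated_window_def
proof (intro exI conjI allI impI)
  fix k assume "k < b"
  hence "(B @ w) ! (1 + k) \<in> set (tl B)" using assms(1) by (cases B) (auto simp: nth_append)
  thus "(B @ w) ! (1 + k) < (B @ w) ! 0" using assms by (cases B) auto
qed (use assms(1) in auto)

lemma foata_blocks_no_window:
  assumes "foata_blocks Bs" "\<forall>B\<in>set Bs. length B \<le> b"
  shows "\<not> has_dominated_window b (concat Bs)"
  using assms
proof (induction Bs)
  case Nil
  show ?case by (simp add: has_dominated_window_def)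
next
  case (Cons B Bs)
  define w where "w = concat (B # Bs)"
  have hB: "B \<noteq> []" "\<forall>x\<in>set (tl B). x < hd B" "\<forall>C\<in>set Bs. hd B < hd C"
    and IH: "\<not> has_dominated_window b (concat Bs)"
    using Cons by (auto simp: foata_blocks_Cons)
  have "length B \<le> b" using Cons.prems(2) by simp
  show ?case
  proof
    assume "has_dominated_window b (concat (B # Bs))"
    then obtain p q where pq: "p < q" "q + b \<le> length w" "\<forall>k<b. w ! (q + k) < w ! p"
      unfolding has_dominated_window_def w_def by blast
    show False
    proof (cases "length B \<le> p")
      case True
      have "has_dominated_window b (concat Bs)" unfolding has_dominated_window_def
        using pq True by (intro exI[of _ "p - length B"] exI[of _ "q - length B"])
          (auto simp: w_def nth_append add.commute)
      thus False using IH by simp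
    next
      case False
      hence "w ! p \<le> hd B" using le_hd_if_tl_less[OF hB(2)] by (simp add: w_def nth_append)
      have "Bs \<noteq> []" using pq \<open>length B \<le> b\<close> by (auto simp: w_def)
      then obtain C Cs where Bs: "Bs = C # Cs" by (cases Bs) auto
      hence "C \<noteq> []" using Cons.prems(1) by (simp add: foata_blocks_Cons)
      have "w ! length B = hd C" "hd B < hd C"
        using concat_Cons_nth_length[OF \<open>C \<noteq> []\<close>] hB(3) Bs by (simp_all add: w_def)
      \<comment> \<open>The window contains the next head, or lies beyond it and is dominated by it.\<close>
      show False
      proof (cases "q \<le> length B")
        case True
        hence "length B - q < b" using pq(1) \<open>length B \<le> b\<close> by linarith
        hence "w ! (q + (length B - q)) < w ! p" using pq(3) by blast
        thus False using True \<open>w ! p \<le> hd B\<close> \<open>w ! length B = hd C\<close> \<open>hd B < hd C\<close> by simp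
      next
        case False
        have "concat Bs ! 0 = hd C" using \<open>C \<noteq> []\<close> Bs by (cases C) auto
        hence "has_dominated_window b (concat Bs)" unfolding has_dominated_window_def
          using pq False \<open>w ! p \<le> hd B\<close> \<open>hd B < hd C\<close>
          by (intro exI[of _ 0] exI[of _ "q - length B"])
            (auto simp: w_def nth_append add.commute intro: order.strict_trans2)
        thus False using IH by simp
      qed
    qed
  qed
qed

lemma foata_blocks_window_iff:
  assumes "foata_blocks Bs"
  shows "has_dominated_window b (concat Bs) \<longleftrightarrow> (\<exists>B\<in>set Bs. b < length B)"
proof
  assume "\<exists>B\<in>set Bs. b < length B"
  then obtain B xs ys where B: "Bs = xs @ B # ys" "b < length B" by (metis split_list)
  hence "\<forall>x\<in>set (tl B). x < hd B" using assms by (auto simp: foata_blocks_def)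
  hence "has_dominated_window b (B @ concat ys)" using has_dominated_window_long_hd B(2) by blast
  thus "has_dominated_window b (concat Bs)" unfolding B(1) by (simp add: has_dominated_window_append)
next
  assume "has_dominated_window b (concat Bs)"
  thus "\<exists>B\<in>set Bs. b < length B"
    using foata_blocks_no_window[OF assms] by (simp add: not_less[symmetric]) blast
qed

section \<open>The Foata correspondence\<close>

lemma finite_cyc_heads: "finite (cyc_heads L s)"
  unfolding cyc_heads_def by simp

lemma cyc_heads_cover:
  assumes "s permutes {1..L}" "x \<in> {1..L}"
  obtains h where "h \<in> cyc_heads L s" "x \<in> cyc_elems s h"
proof
  let ?E = "cyc_elems s x"
  have "finite ?E" using cyc_elems_subset[OF assms] finite_subset by blast
  hence "Max ?E \<in> ?E" using cyc_elems_self Max_in by blast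
  hence E: "cyc_elems s (Max ?E) = ?E"
    using cyc_elems_eq[OF permutes_imp_permutation[OF _ assms(1)]] by simp
  thus "x \<in> cyc_elems s (Max ?E)" using cyc_elems_self by simp
  show "Max ?E \<in> cyc_heads L s"
    using E \<open>Max ?E \<in> ?E\<close> cyc_elems_subset[OF assms] unfolding cyc_heads_def by auto
qed

lemma cyc_heads_disjoint:
  assumes "permutation s" "h \<in> cyc_heads L s" "h' \<in> cyc_heads L s" "h \<noteq> h'"
  shows "cyc_elems s h \<inter> cyc_elems s h' = {}"
proof (rule ccontr)
  assume "cyc_elems s h \<inter> cyc_elems s h' \<noteq> {}"
  then obtain y where "y \<in> cyc_elems s h" "y \<in> cyc_elems s h'" by blast
  hence "cyc_elems s h = cyc_elems s h'" using cyc_elems_eq[OF assms(1)] by metis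
  thus False using assms(2-4) unfolding cyc_heads_def by auto
qed

lemma cyc_word_tl_less_head:
  assumes "s permutes {1..L}" "h \<in> cyc_heads L s" "y \<in> set (tl (cyc_word s h))"
  shows "y < h"
proof -
  have \<pi>: "permutation s" using permutes_imp_permutation[OF _ assms(1)] by simp
  have "h \<in> {1..L}" "h = Max (cyc_elems s h)" using assms(2) unfolding cyc_heads_def by auto
  moreover have "finite (cyc_elems s h)" using cyc_elems_subset[OF assms(1)] \<open>h \<in> {1..L}\<close>
    by (meson finite_atLeastAtMost finite_subset)
  moreover have "y \<in> cyc_elems s h"
    using assms(3) set_cyc_word[OF \<pi>] by (metis list.set_sel(2) tl_Nil empty_iff list.set(1))
  moreover have "y \<noteq> h"
    using assms(3) cyc_word_distinct[OF \<pi>, of h] cyc_word_hd[OF \<pi>, of h] by (cases "cyc_word s h") auto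
  ultimately show ?thesis by (metis Max_ge order_less_le)
qed

definition cycle_blocks :: "nat \<Rightarrow> (nat \<Rightarrow> nat) \<Rightarrow> nat list list" where
  "cycle_blocks L s = map (cyc_word s) (sorted_list_of_set (cyc_heads L s))"

lemma foata_word_eq_concat: "foata_word L s = concat (cycle_blocks L s)"
  unfolding foata_word_def cycle_blocks_def ..

lemma map_hd_cycle_blocks:
  "permutation s \<Longrightarrow> map hd (cycle_blocks L s) = sorted_list_of_set (cyc_heads L s)"
  unfolding cycle_blocks_def by (simp add: cyc_word_hd map_idI)

lemma foata_blocks_cycle_blocks:
  assumes "s permutes {1..L}" shows "foata_blocks (cycle_blocks L s)"
proof -
  have \<pi>: "permutation s" using permutes_imp_permutation[OF _ assms] by simp
  show ?thesis unfolding foata_blocks_def map_hd_cycle_blocks[OF \<pi>]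
    using cyc_word_hd[OF \<pi>] cyc_word_tl_less_head[OF assms] finite_cyc_heads
    by (auto simp: cycle_blocks_def)
qed

lemma set_foata_word:
  assumes "s permutes {1..L}" shows "set (foata_word L s) = {1..L}"
proof -
  have \<pi>: "permutation s" using permutes_imp_permutation[OF _ assms] by simp
  have "set (foata_word L s) = (\<Union>h\<in>cyc_heads L s. cyc_elems s h)"
    unfolding foata_word_def using finite_cyc_heads set_cyc_word[OF \<pi>] by auto
  also have "\<dots> = {1..L}"
    using cyc_elems_subset[OF assms] cyc_heads_cover[OF assms]
    by (fastforce simp: cyc_heads_def)
  finally show ?thesis .
qed

lemma distinct_foata_word:
  assumes "s permutes {1..L}" shows "distinct (foata_word L s)"
  unfolding foata_word_def
proof (rule distinct_concat)
  have \<pi>: "permutation s" using permutes_imp_permutation[OF _ assms] by simp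
  let ?hs = "sorted_list_of_set (cyc_heads L s)"
  have "inj_on (cyc_word s) (set ?hs)" by (rule inj_onI) (metis cyc_word_hd(2)[OF \<pi>])
  thus "distinct (map (cyc_word s) ?hs)" by (simp add: distinct_map)
  show "\<And>ys. ys \<in> set (map (cyc_word s) ?hs) \<Longrightarrow> distinct ys"
    using cyc_word_distinct[OF \<pi>] by auto
  fix ys zs assume "ys \<in> set (map (cyc_word s) ?hs)" "zs \<in> set (map (cyc_word s) ?hs)" "ys \<noteq> zs"
  then obtain h h' where "ys = cyc_word s h" "zs = cyc_word s h'" "h \<noteq> h'"
    "h \<in> cyc_heads L s" "h' \<in> cyc_heads L s"
    using finite_cyc_heads by auto
  thus "set ys \<inter> set zs = {}" using cyc_heads_disjoint[OF \<pi>] set_cyc_word[OF \<pi>] by simp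
qed

lemma length_foata_word:
  "s permutes {1..L} \<Longrightarrow> length (foata_word L s) = L"
  using distinct_card[OF distinct_foata_word] set_foata_word by fastforce

lemma map_foata_upt:
  assumes "s permutes {1..L}" shows "map (foata L s) [1..<L+1] = foata_word L s"
  by (rule nth_equalityI) (simp_all add: foata_def length_foata_word[OF assms] del: upt_Suc)

lemma foata_permutes:
  assumes "s permutes {1..L}" shows "foata L s permutes {1..L}"
proof (rule bij_imp_permutes)
  show "\<And>x. x \<notin> {1..L} \<Longrightarrow> foata L s x = x" unfolding foata_def by auto
  have "bij_betw (\<lambda>i. foata_word L s ! i) {..<L} {1..L}"
    using bij_betw_nth[OF distinct_foata_word[OF assms]] length_foata_word[OF assms]
      set_foata_word[OF assms] by (metis lessThan_atLeast0)
  moreover have "bij_betw (\<lambda>i. i - 1) {1..L} {..<L}"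
    by (rule bij_betw_byWitness[where f' = Suc]) auto
  ultimately have "bij_betw ((\<lambda>i. foata_word L s ! i) \<circ> (\<lambda>i. i - 1)) {1..L} {1..L}"
    by (rule bij_betw_trans[rotated])
  thus "bij_betw (foata L s) {1..L} {1..L}"
    by (rule bij_betw_cong[THEN iffD1, rotated]) (simp add: foata_def)
qed

lemma eq_on_cyc_word:
  assumes "permutation s" "permutation s'" "cyc_word s h = cyc_word s' h" "x \<in> set (cyc_word s h)"
  shows "s x = s' x"
proof -
  obtain r where r: "r < cyc_len s h" "x = cyc_word s h ! r"
    using assms(4) by (auto simp: in_set_conv_nth)
  have "cyc_len s' h = cyc_len s h" using arg_cong[OF assms(3), of length] by simp
  thus ?thesis using cyc_word_next[OF assms(1) r(1)] cyc_word_next[of s' r h] assms(2,3) r by simp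
qed

lemma foata_word_inj:
  assumes s: "s permutes {1..L}" and s': "s' permutes {1..L}"
    and eq: "foata_word L s = foata_word L s'"
  shows "s = s'"
proof
  have \<pi>: "permutation s" "permutation s'" using permutes_imp_permutation s s' by auto
  have blocks: "cycle_blocks L s = cycle_blocks L s'"
    using foata_blocks_concat_inj[OF foata_blocks_cycle_blocks[OF s] foata_blocks_cycle_blocks[OF s']]
      eq by (simp add: foata_word_eq_concat)
  hence heads: "sorted_list_of_set (cyc_heads L s) = sorted_list_of_set (cyc_heads L s')"
    using map_hd_cycle_blocks \<pi> by metis
  hence "cyc_heads L s = cyc_heads L s'"
    using finite_cyc_heads by (metis sorted_list_of_set.set_sorted_key_list_of_set)
  hence words: "cyc_word s h = cyc_word s' h" if "h \<in> cyc_heads L s" for h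
    using blocks heads that finite_cyc_heads by (auto simp: cycle_blocks_def map_eq_conv)
  fix x show "s x = s' x"
  proof (cases "x \<in> {1..L}")
    case True
    then obtain h where "h \<in> cyc_heads L s" "x \<in> cyc_elems s h" using cyc_heads_cover[OF s] by blast
    thus ?thesis using eq_on_cyc_word[OF \<pi>] words set_cyc_word[OF \<pi>(1)] by blast
  qed (simp add: permutes_not_in[OF s] permutes_not_in[OF s'])
qed

lemma bij_betw_foata: "bij_betw (foata L) (perms L) (perms L)"
proof -
  have maps: "foata L ` perms L \<subseteq> perms L" using foata_permutes by (auto simp: perms_def)
  have "inj_on (foata L) (perms L)"
    using foata_word_inj map_foata_upt by (intro inj_onI) (metis mem_Collect_eq perms_def)
  moreover have "finite (perms L)" by (simp add: perms_def finite_permutations)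
  ultimately show ?thesis using endo_inj_surj maps by (simp add: bij_betw_def)
qed

lemma setA_iff_no_window:
  assumes "s permutes {1..L}"
  shows "s \<in> setA b L \<longleftrightarrow> \<not> has_dominated_window b (foata_word L s)"
proof -
  have \<pi>: "permutation s" using permutes_imp_permutation[OF _ assms] by simp
  have "s \<in> setA b L \<longleftrightarrow> (\<forall>c\<in>{1..L}. cyc_len s c \<le> b)"
    using assms by (simp add: setA_def perms_def)
  also have "\<dots> \<longleftrightarrow> (\<forall>h\<in>cyc_heads L s. cyc_len s h \<le> b)"
  proof
    assume "\<forall>h\<in>cyc_heads L s. cyc_len s h \<le> b"
    thus "\<forall>c\<in>{1..L}. cyc_len s c \<le> b"
      using cyc_heads_cover[OF assms] cyc_len_cyc_elems[OF \<pi>] by metis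
  qed (simp add: cyc_heads_def)
  also have "\<dots> \<longleftrightarrow> (\<forall>B\<in>set (cycle_blocks L s). length B \<le> b)"
    using finite_cyc_heads by (simp add: cycle_blocks_def)
  also have "\<dots> \<longleftrightarrow> \<not> has_dominated_window b (foata_word L s)"
    using foata_blocks_window_iff[OF foata_blocks_cycle_blocks[OF assms]]
    by (auto simp: foata_word_eq_concat not_le)
  finally show ?thesis .
qed

definition reflect :: "nat \<Rightarrow> nat \<Rightarrow> nat" where
  "reflect L i = (if i \<in> {1..L} then L + 1 - i else i)"

lemma reflect_reflect [simp]: "reflect L (reflect L i) = i"
  unfolding reflect_def by auto

lemma reflect_permutes: "reflect L permutes {1..L}"
  by (rule bij_imp_permutes, rule bij_betw_byWitness[where f' = "reflect L"])
    (auto simp: reflect_def)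

lemma tilde_eq_reflect_conj:
  assumes "u permutes {1..L}" shows "tilde L u = reflect L \<circ> u \<circ> reflect L"
proof
  fix i show "tilde L u i = (reflect L \<circ> u \<circ> reflect L) i"
    using permutes_in_image[OF assms, of "L + 1 - i"] permutes_not_in[OF assms, of i]
    by (auto simp: tilde_def reflect_def)
qed

lemma tilde_permutes:
  assumes "u permutes {1..L}" shows "tilde L u permutes {1..L}"
  unfolding tilde_eq_reflect_conj[OF assms] by (intro permutes_compose reflect_permutes assms)

lemma tilde_tilde:
  assumes "u permutes {1..L}" shows "tilde L (tilde L u) = u"
proof -
  have "tilde L (tilde L u) = reflect L \<circ> tilde L u \<circ> reflect L"
    by (rule tilde_eq_reflect_conj[OF tilde_permutes[OF assms]])
  also have "\<dots> = u" by (simp add: tilde_eq_reflect_conj[OF assms] fun_eq_iff)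
  finally show ?thesis .
qed

lemma bij_betw_tilde: "bij_betw (tilde L) (perms L) (perms L)"
  by (rule bij_betw_byWitness[where f' = "tilde L"])
    (use tilde_tilde tilde_permutes in \<open>auto simp: perms_def\<close>)

lemma tilde_less_iff:
  assumes "u permutes {1..L}" "i \<in> {1..L}" "i' \<in> {1..L}"
  shows "tilde L u i < tilde L u i' \<longleftrightarrow> u (L + 1 - i') < u (L + 1 - i)"
proof -
  have "L + 1 - i \<in> {1..L}" "L + 1 - i' \<in> {1..L}" using assms(2,3) by auto
  hence "u (L + 1 - i) \<le> L" "u (L + 1 - i') \<le> L"
    using permutes_in_image[OF assms(1)] by (meson atLeastAtMost_iff)+
  moreover have "tilde L u i = L + 1 - u (L + 1 - i)" "tilde L u i' = L + 1 - u (L + 1 - i')"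
    using assms(2,3) by (simp_all add: tilde_def)
  ultimately show ?thesis by linarith
qed

lemma tilde_pattern_iff_window:
  assumes "u permutes {1..L}"
  shows "(\<exists>i j. j + b < i \<and> i \<le> L \<and> (\<forall>k\<in>{1..b}. tilde L u (j + k) > tilde L u i))
    \<longleftrightarrow> has_dominated_window b (map u [1..<L+1])"
proof -
  define w where "w = map u [1..<L+1]"
  have len: "length w = L" by (simp add: w_def del: upt_Suc)
  have w_nth: "w ! m = u (Suc m)" if "m < L" for m
    using that by (simp add: w_def del: upt_Suc)
  have "(\<exists>i j. j + b < i \<and> i \<le> L \<and> (\<forall>k\<in>{1..b}. tilde L u (j + k) > tilde L u i))
      \<longleftrightarrow> has_dominated_window b w"
    unfolding has_dominated_window_def
  proof safe
    fix i j assume ij: "j + b < i" "i \<le> L" "\<forall>k\<in>{1..b}. tilde L u (j + k) > tilde L u i"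
    have "w ! (L - j - b + k) < w ! (L - i)" if "k < b" for k
    proof -
      have "b - k \<in> {1..b}" "i \<in> {1..L}" "j + (b - k) \<in> {1..L}" using ij that by auto
      hence "u (L + 1 - (j + (b - k))) < u (L + 1 - i)"
        using ij(3) tilde_less_iff[OF assms] by blast
      moreover have "L + 1 - (j + (b - k)) = Suc (L - j - b + k)" "L + 1 - i = Suc (L - i)"
        using ij that by auto
      moreover have "w ! (L - j - b + k) = u (Suc (L - j - b + k))" "w ! (L - i) = u (Suc (L - i))"
        using w_nth ij that by auto
      ultimately show ?thesis by metis
    qed
    thus "\<exists>p q. p < q \<and> q + b \<le> length w \<and> (\<forall>k<b. w ! (q + k) < w ! p)"
      using ij by (intro exI[of _ "L - i"] exI[of _ "L - j - b"]) (simp add: len)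
  next
    fix p q assume pq: "p < q" "q + b \<le> length w" "\<forall>k<b. w ! (q + k) < w ! p"
    have "tilde L u (L - q - b + k) > tilde L u (L - p)" if "k \<in> {1..b}" for k
    proof -
      have "b - k < b" using that by simp
      hence "w ! (q + (b - k)) < w ! p" using pq(3) by blast
      moreover have "w ! (q + (b - k)) = u (Suc (q + (b - k)))" "w ! p = u (Suc p)"
        using w_nth pq that len by auto
      moreover have "L + 1 - (L - q - b + k) = Suc (q + (b - k))" "L + 1 - (L - p) = Suc p"
        using pq that len by auto
      moreover have "L - p \<in> {1..L}" "L - q - b + k \<in> {1..L}" using pq that len by auto
      ultimately show ?thesis using tilde_less_iff[OF assms] by metis
    qed
    thus "\<exists>i j. j + b < i \<and> i \<le> L \<and> (\<forall>k\<in>{1..b}. tilde L u (j + k) > tilde L u i)"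
      using pq by (intro exI[of _ "L - p"] exI[of _ "L - q - b"]) (simp add: len)
  qed
  thus ?thesis unfolding w_def .
qed

lemma setB_iff_no_window:
  assumes "u permutes {1..L}"
  shows "tilde L u \<in> setB b L \<longleftrightarrow> \<not> has_dominated_window b (map u [1..<L+1])"
  using tilde_pattern_iff_window[OF assms] tilde_permutes[OF assms]
  unfolding setB_def perms_def by blast

lemma bij_betw_subset_preimage:
  assumes "bij_betw f X Y" "\<forall>x\<in>X. x \<in> A \<longleftrightarrow> f x \<in> B" "A \<subseteq> X" "B \<subseteq> Y"
  shows "bij_betw f A B"
proof (rule bij_betw_subset[OF assms(1,3)])
  show "f ` A = B" using assms bij_betw_imp_surj_on[OF assms(1)] by blast
qed

theorem mainTheorem2:
  fixes b L :: nat
  assumes "b \<ge> 1" and "L \<ge> 1"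
  shows "bij_betw (\<lambda>s. tilde L (foata L s)) (setA b L) (setB b L)
         \<and> card (setA b L) = card (setB b L)"
proof -
  let ?f = "\<lambda>s. tilde L (foata L s)"
  have "bij_betw ?f (perms L) (perms L)"
    using bij_betw_trans[OF bij_betw_foata bij_betw_tilde] by (simp add: comp_def)
  moreover have "\<forall>s\<in>perms L. s \<in> setA b L \<longleftrightarrow> ?f s \<in> setB b L"
    using setA_iff_no_window setB_iff_no_window foata_permutes map_foata_upt
    by (simp add: perms_def)
  ultimately have "bij_betw ?f (setA b L) (setB b L)"
    by (rule bij_betw_subset_preimage) (auto simp: setA_def setB_def)
  thus ?thesis using bij_betw_same_card by blast
qed

end
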